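(* For the Hard-SVM algorithm, there exist linearly-separable data distributions $D_A,D_B$ over $\mathbb{R}\times\{-1,1\}$ and a training-set size $n$ that induce an evolutionary prediction game with beneficial coexistence: there is an equilibrium $\mathbf{p}^*$ with $p^*_A>0$, $p^*_B>0$ such that each group's fitness at $\mathbf{p}^*$ exceeds its fitness when it is the sole group in the population, $F_k(\mathbf{p}^* )>F_k(\mathbf{e}_k)$ for $k\in\{A,B\}$.
   Context: Hard-SVM: given a linearly separable training set $\{(x_i,y_i)\}_{i=1}^n\subset\mathbb{R}^d\times\{-1,1\}$, output $\mathrm{sign}(w^*\cdot x+b^* )$ with $(w^*,b^* )=\arg\max_{(w,b):\|w\|=1}\min_iy_i(w\cdot x_i+b)$. The learning algorithm samples $S\sim D_{\mathbf{p}}^n$ i.i.d. from $D_{\mathbf{p}}=p_AD_A+p_BD_B$ ($\mathbf{p}\in\Delta^2$) and outputs the Hard-SVM classifier $h_S$; the evolutionary prediction game is $F_k(\mathbf{p})=\mathbb{E}_S[\Pr_{(x,y)\sim D_k}[h_S(x)=y]]$. $\mathbf{e}_k$ is the state in which only group $k$ is present. Equilibrium: $\mathrm{supp}(\mathbf{p}^* )\subseteq\arg\max_kF_k(\mathbf{p}^* )$. A distribution is linearly separable if its support can be separated by a hyperplane according to the labels. *)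

theory Defs
  imports "HOL-Probability.Probability"
begin

text \<open>Data points are pairs (x, y) with x real and label y an integer in {-1, 1}.
  The two groups are A and B; a population state p in the simplex is given by
  its A-component pA in [0,1] (pB = 1 - pA).\<close>

datatype grp = GA | GB

definition labels_ok :: "(real \<times> int) pmf \<Rightarrow> bool" where
  "labels_ok D \<longleftrightarrow> (\<forall>(x, y) \<in> set_pmf D. y \<in> {-1, 1})"

definition lin_separable :: "(real \<times> int) pmf \<Rightarrow> bool" where
  "lin_separable D \<longleftrightarrow> (\<exists>w b. w \<noteq> 0 \<and> (\<forall>(x, y) \<in> set_pmf D. of_int y * (w * x + b) > 0))"

definition margin :: "(real \<times> int) list \<Rightarrow> real \<Rightarrow> real \<Rightarrow> real" where
  "margin S w b = Min ((\<lambda>(x, y). of_int y * (w * x + b)) ` set S)"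

definition svm_params :: "(real \<times> int) list \<Rightarrow> real \<times> real" where
  "svm_params S = (SOME (w, b). \<bar>w\<bar> = 1 \<and>
      (\<forall>w' b'. \<bar>w'\<bar> = 1 \<longrightarrow> margin S w' b' \<le> margin S w b))"

text \<open>Hard-SVM classifier h_S. If all training labels coincide the max-margin problem is
  unbounded (b to infinity); the supremum is approached by the constant classifier with that label.\<close>
definition hard_svm :: "(real \<times> int) list \<Rightarrow> real \<Rightarrow> real" where
  "hard_svm S x =
     (if S \<noteq> [] \<and> (\<forall>z \<in> set S. snd z = snd (hd S)) then of_int (snd (hd S))
      else sgn (fst (svm_params S) * x + snd (svm_params S)))"

definition mix :: "real \<Rightarrow> (real \<times> int) pmf \<Rightarrow> (real \<times> int) pmf \<Rightarrow> (real \<times> int) pmf" where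
  "mix pA DA DB = bind_pmf (bernoulli_pmf pA) (\<lambda>c. if c then DA else DB)"

fun iid :: "nat \<Rightarrow> 'a pmf \<Rightarrow> 'a list pmf" where
  "iid 0 D = return_pmf []"
| "iid (Suc n) D = bind_pmf D (\<lambda>z. map_pmf (Cons z) (iid n D))"

definition group_dist :: "(real \<times> int) pmf \<Rightarrow> (real \<times> int) pmf \<Rightarrow> grp \<Rightarrow> (real \<times> int) pmf" where
  "group_dist DA DB k = (case k of GA \<Rightarrow> DA | GB \<Rightarrow> DB)"

definition fitness :: "(real \<times> int) pmf \<Rightarrow> (real \<times> int) pmf \<Rightarrow> nat \<Rightarrow> grp \<Rightarrow> real \<Rightarrow> real" where
  "fitness DA DB n k pA =
     measure_pmf.expectation (iid n (mix pA DA DB))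
       (\<lambda>S. measure_pmf.prob (group_dist DA DB k) {(x, y). hard_svm S x = of_int y})"

definition share :: "grp \<Rightarrow> real \<Rightarrow> real" where
  "share k pA = (case k of GA \<Rightarrow> pA | GB \<Rightarrow> 1 - pA)"

definition equilibrium :: "(real \<times> int) pmf \<Rightarrow> (real \<times> int) pmf \<Rightarrow> nat \<Rightarrow> real \<Rightarrow> bool" where
  "equilibrium DA DB n pA \<longleftrightarrow> 0 \<le> pA \<and> pA \<le> 1 \<and>
     (\<forall>k. share k pA > 0 \<longrightarrow> (\<forall>k'. fitness DA DB n k' pA \<le> fitness DA DB n k pA))"

definition pure_state :: "grp \<Rightarrow> real" where
  "pure_state k = (case k of GA \<Rightarrow> 1 | GB \<Rightarrow> 0)"

end

theory Submission
  imports Defs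
begin

(* All data lives on the two labelled points (1, 1) and (-1, -1). A Hard-SVM trained on a sample
   containing both of them is the perfect classifier sgn x, while a sample with a single label
   gives the constant classifier predicting that label. So if the population puts mass q on the
   positive point and group k puts mass r there, a sample of size n errs exactly when it is
   one-labelled, and F_k = 1 - q^n (1 - r) - (1 - q)^n r. Take r = 4/5 for A, r = 1/5 for B and
   n = 4. At the balanced state q = 1/2, so both groups have fitness 1 - 1/2^4 = 15/16 and the state
   is an interior equilibrium; alone, each group has q = r and fitness 1 - 260/3125 < 15/16, since a
   lopsided population produces one-labelled samples far more often. *)

lemma nonempty_subset_doubleton: "A \<subseteq> {a, b} \<Longrightarrow> A \<noteq> {} \<Longrightarrow> A = {a} \<or> A = {b} \<or> A = {a, b}"
  by auto

lemma set_eq_singleton_iff_replicate: "S \<noteq> [] \<Longrightarrow> set S = {z} \<longleftrightarrow> S = replicate (length S) z"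
  by (metis replicate_length_same set_replicate length_0_conv singletonD)

lemma iid_Suc_pair: "iid (Suc n) D = map_pmf (\<lambda>(z, S). z # S) (pair_pmf D (iid n D))"
  by (simp add: pair_pmf_def map_pmf_def bind_assoc_pmf bind_return_pmf)

lemma pmf_iid: "pmf (iid (length S) D) S = (\<Prod>z\<leftarrow>S. pmf D z)"
proof (induction S)
  case (Cons z S)
  have "inj (\<lambda>(z, S). z # S)" by (auto simp: inj_def)
  from pmf_map_inj'[OF this, of "pair_pmf D (iid (length S) D)" "(z, S)"] Cons show ?case
    by (simp only: length_Cons iid_Suc_pair) (simp add: pmf_pair)
qed simp

lemma set_pmf_iid: "S \<in> set_pmf (iid n D) \<Longrightarrow> length S = n \<and> set S \<subseteq> set_pmf D"
  by (induction n arbitrary: S) fastforce+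

lemma finite_set_pmf_iid: "finite (set_pmf D) \<Longrightarrow> finite (set_pmf (iid n D))"
  by (rule finite_subset[of _ "{S. set S \<subseteq> set_pmf D \<and> length S = n}"])
     (auto dest: set_pmf_iid intro: finite_lists_length_eq)

lemma set_pmf_mix: "set_pmf (mix p DA DB) \<subseteq> set_pmf DA \<union> set_pmf DB"
  by (auto simp: mix_def split: if_splits)

lemma pmf_mix: "0 \<le> p \<Longrightarrow> p \<le> 1 \<Longrightarrow> pmf (mix p DA DB) z = p * pmf DA z + (1 - p) * pmf DB z"
  by (simp add: mix_def pmf_bind)

abbreviation pos_pt :: "real \<times> int" where "pos_pt \<equiv> (1, 1)"
abbreviation neg_pt :: "real \<times> int" where "neg_pt \<equiv> (-1, -1)"

definition two_point_pmf :: "real \<Rightarrow> (real \<times> int) pmf" where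
  "two_point_pmf r = map_pmf (\<lambda>b. if b then pos_pt else neg_pt) (bernoulli_pmf r)"

lemma set_pmf_two_point_pmf: "set_pmf (two_point_pmf r) \<subseteq> {pos_pt, neg_pt}"
  by (auto simp: two_point_pmf_def)

lemma pmf_two_point_pmf:
  assumes "0 \<le> r" "r \<le> 1"
  shows "pmf (two_point_pmf r) pos_pt = r"
proof -
  have "inj (\<lambda>b. if b then pos_pt else neg_pt)" by (simp add: inj_def)
  from pmf_map_inj'[OF this, of "bernoulli_pmf r" True] assms show ?thesis
    by (simp add: two_point_pmf_def)
qed

lemma prob_two_points:
  assumes "set_pmf D \<subseteq> {pos_pt, neg_pt}"
  shows "measure_pmf.prob D A = (\<Sum>z \<in> A \<inter> {pos_pt, neg_pt}. pmf D z)"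
proof -
  have "A \<inter> set_pmf D = (A \<inter> {pos_pt, neg_pt}) \<inter> set_pmf D" using assms by blast
  then have "measure_pmf.prob D A = measure_pmf.prob D (A \<inter> {pos_pt, neg_pt})"
    by (metis measure_Int_set_pmf)
  then show ?thesis by (simp add: measure_measure_pmf_finite)
qed

lemma pmf_neg_pt: "set_pmf D \<subseteq> {pos_pt, neg_pt} \<Longrightarrow> pmf D neg_pt = 1 - pmf D pos_pt"
  using prob_two_points[of D UNIV] by simp

lemma labels_ok_two_points: "set_pmf D \<subseteq> {pos_pt, neg_pt} \<Longrightarrow> labels_ok D"
  unfolding labels_ok_def by auto

lemma lin_separable_two_points: "set_pmf D \<subseteq> {pos_pt, neg_pt} \<Longrightarrow> lin_separable D"
  unfolding lin_separable_def by (intro exI[of _ 1] exI[of _ 0]) auto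

lemma margin_two_points: "set S = {pos_pt, neg_pt} \<Longrightarrow> margin S w b = min (w + b) (w - b)"
  by (simp add: margin_def)

lemma svm_params_two_points:
  assumes S: "set S = {pos_pt, neg_pt}"
  shows "svm_params S = (1, 0)"
  unfolding svm_params_def
proof (rule some_equality)
  show "case (1, 0) of (w, b) \<Rightarrow> \<bar>w\<bar> = 1 \<and> (\<forall>w' b'. \<bar>w'\<bar> = 1 \<longrightarrow> margin S w' b' \<le> margin S w b)"
    using S by (auto simp: margin_two_points)
next
  fix wb :: "real \<times> real"
  assume "case wb of (w, b) \<Rightarrow> \<bar>w\<bar> = 1 \<and> (\<forall>w' b'. \<bar>w'\<bar> = 1 \<longrightarrow> margin S w' b' \<le> margin S w b)"
  then obtain w b where "wb = (w, b)" "\<bar>w\<bar> = 1" "margin S 1 0 \<le> margin S w b"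
    by (cases wb) auto
  (* the margin min (w + b) (w - b) = w - |b| is maximal on |w| = 1 only at w = 1, b = 0 *)
  then show "wb = (1, 0)"
    using S by (auto simp: margin_two_points min_def split: if_splits)
qed

lemma hard_svm_two_points:
  assumes S: "set S = {pos_pt, neg_pt}"
  shows "hard_svm S x = sgn x"
proof -
  from S have "\<not> (S \<noteq> [] \<and> (\<forall>z \<in> set S. snd z = snd (hd S)))" by auto
  then show ?thesis by (simp only: hard_svm_def if_False svm_params_two_points[OF S]) simp
qed

lemma hard_svm_one_label:
  assumes S: "set S = {z}"
  shows "hard_svm S x = of_int (snd z)"
proof -
  have "S \<noteq> []" using S by force
  moreover have "hd S = z" using hd_in_set[OF \<open>S \<noteq> []\<close>] S by simp
  ultimately have "S \<noteq> [] \<and> (\<forall>z' \<in> set S. snd z' = snd (hd S))" using S by simp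
  then show ?thesis unfolding hard_svm_def \<open>hd S = z\<close> by (rule if_P)
qed

lemma hard_svm_accuracy_two_points:
  assumes D: "set_pmf D \<subseteq> {pos_pt, neg_pt}" and S: "set S \<subseteq> {pos_pt, neg_pt}" "S \<noteq> []"
  shows "measure_pmf.prob D {(x, y). hard_svm S x = of_int y} =
    (if set S = {pos_pt} then pmf D pos_pt else if set S = {neg_pt} then 1 - pmf D pos_pt else 1)"
proof -
  let ?correct = "{(x, y). hard_svm S x = of_int y} \<inter> {pos_pt, neg_pt}"
  have "set S \<noteq> {}" using S(2) by simp
  consider "set S = {pos_pt}" | "set S = {neg_pt}" | "set S = {pos_pt, neg_pt}"
    using nonempty_subset_doubleton[OF S(1) \<open>set S \<noteq> {}\<close>] by argo
  then show ?thesis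
  proof cases
    case 1
    then have "hard_svm S x = 1" for x by (simp add: hard_svm_one_label)
    then have "?correct = {pos_pt}" by auto
    with 1 show ?thesis by (simp add: prob_two_points[OF D])
  next
    case 2
    then have "hard_svm S x = -1" for x by (simp add: hard_svm_one_label)
    then have "?correct = {neg_pt}" by auto
    with 2 show ?thesis by (simp add: prob_two_points[OF D] pmf_neg_pt[OF D])
  next
    case 3
    then have "hard_svm S x = sgn x" for x by (simp add: hard_svm_two_points)
    then have "?correct = {pos_pt, neg_pt}" by auto
    with 3 show ?thesis by (simp add: prob_two_points[OF D] pmf_neg_pt[OF D])
  qed
qed

lemma expected_hard_svm_accuracy_two_points:
  assumes D: "set_pmf D \<subseteq> {pos_pt, neg_pt}" and Dk: "set_pmf Dk \<subseteq> {pos_pt, neg_pt}"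
    and n: "n \<ge> 1"
  shows "measure_pmf.expectation (iid n D) (\<lambda>S. measure_pmf.prob Dk {(x, y). hard_svm S x = of_int y})
    = 1 - pmf D pos_pt ^ n * (1 - pmf Dk pos_pt) - (1 - pmf D pos_pt) ^ n * pmf Dk pos_pt"
proof -
  define r where "r = pmf Dk pos_pt"
  have fin: "finite (set_pmf (iid n D))"
    using D by (intro finite_set_pmf_iid) (auto intro: finite_subset)
  let ?all_pos = "indicator {replicate n pos_pt} :: _ \<Rightarrow> real"
  let ?all_neg = "indicator {replicate n neg_pt} :: _ \<Rightarrow> real"
  have "measure_pmf.prob Dk {(x, y). hard_svm S x = of_int y} = 1 - (1 - r) * ?all_pos S - r * ?all_neg S"
    if "S \<in> set_pmf (iid n D)" for S
  proof -
    from set_pmf_iid[OF that] D have S: "length S = n" "set S \<subseteq> {pos_pt, neg_pt}" by auto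
    with n have "S \<noteq> []" by auto
    with S n show ?thesis
      by (simp add: hard_svm_accuracy_two_points[OF Dk] set_eq_singleton_iff_replicate
          replicate_eq_replicate indicator_def r_def)
  qed
  then have "measure_pmf.expectation (iid n D) (\<lambda>S. measure_pmf.prob Dk {(x, y). hard_svm S x = of_int y})
      = measure_pmf.expectation (iid n D) (\<lambda>S. 1 - (1 - r) * ?all_pos S - r * ?all_neg S)"
    by (intro integral_cong_AE) (simp_all add: AE_measure_pmf_iff)
  also have "\<dots> = 1 - (1 - r) * pmf (iid n D) (replicate n pos_pt) - r * pmf (iid n D) (replicate n neg_pt)"
    by (simp add: integrable_measure_pmf_finite[OF fin] measure_pmf_single)
  also have "\<dots> = 1 - pmf D pos_pt ^ n * (1 - r) - (1 - pmf D pos_pt) ^ n * r"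
    using pmf_iid[of "replicate n _" D] by (simp add: pmf_neg_pt[OF D])
  finally show ?thesis unfolding r_def .
qed

lemma fitness_two_points:
  fixes k :: grp
  assumes A: "set_pmf DA \<subseteq> {pos_pt, neg_pt}" and B: "set_pmf DB \<subseteq> {pos_pt, neg_pt}"
    and n: "n \<ge> 1" and p: "0 \<le> p" "p \<le> 1"
  defines "q \<equiv> p * pmf DA pos_pt + (1 - p) * pmf DB pos_pt"
    and "r \<equiv> pmf (group_dist DA DB k) pos_pt"
  shows "fitness DA DB n k p = 1 - q ^ n * (1 - r) - (1 - q) ^ n * r"
proof -
  have "set_pmf (mix p DA DB) \<subseteq> {pos_pt, neg_pt}" using set_pmf_mix A B by blast
  moreover have "set_pmf (group_dist DA DB k) \<subseteq> {pos_pt, neg_pt}"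
    using A B by (cases k) (simp_all add: group_dist_def)
  ultimately show ?thesis
    unfolding fitness_def q_def r_def
    by (subst expected_hard_svm_accuracy_two_points[OF _ _ n]) (simp_all add: pmf_mix p)
qed

theorem theorem7:
  shows "\<exists>DA DB :: (real \<times> int) pmf. \<exists>n::nat.
     labels_ok DA \<and> labels_ok DB \<and> lin_separable DA \<and> lin_separable DB \<and> n \<ge> 1 \<and>
     (\<exists>pA. equilibrium DA DB n pA \<and> pA > 0 \<and> 1 - pA > 0 \<and>
        (\<forall>k. fitness DA DB n k pA > fitness DA DB n k (pure_state k)))"
proof -
  define DA DB where "DA = two_point_pmf (4/5)" and "DB = two_point_pmf (1/5)"
  have supp: "set_pmf DA \<subseteq> {pos_pt, neg_pt}" "set_pmf DB \<subseteq> {pos_pt, neg_pt}"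
    unfolding DA_def DB_def by (rule set_pmf_two_point_pmf)+
  have pmf_pos: "pmf DA pos_pt = 4/5" "pmf DB pos_pt = 1/5"
    unfolding DA_def DB_def by (simp_all add: pmf_two_point_pmf)
  note fit = fitness_two_points[OF supp, of 4, unfolded pmf_pos]
  have balanced: "fitness DA DB 4 k (1/2) = 15/16" for k
    by (cases k) (simp_all add: fit group_dist_def pmf_pos power_divide)
  have pure: "fitness DA DB 4 k (pure_state k) < fitness DA DB 4 k (1/2)" for k
    unfolding balanced
    by (cases k) (simp_all add: fit group_dist_def pmf_pos pure_state_def power_divide)
  have equilibrium: "equilibrium DA DB 4 (1/2)"
    unfolding equilibrium_def balanced by simp
  show ?thesis
    by (rule exI[of _ DA], rule exI[of _ DB], rule exI[of _ 4])
       (use supp equilibrium pure in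
         \<open>auto simp: labels_ok_two_points lin_separable_two_points intro!: exI[of _ "1/2"]\<close>)
qed

end
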